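(* Let $(Y,\mathfrak{T},\mathcal{P})$ be a primal fuzzy topological space. Then the family $\mathcal{B}_{\mathcal{P}}=\{\mu-\bar{\lambda}:\ \mu\in\mathfrak{T},\ \lambda\in\mathbb{I}^Y,\ \lambda\notin\mathcal{P}\}$ is a fuzzy base for the primal fuzzy topology $\mathfrak{T}^\diamond$; that is, $\mathcal{B}_{\mathcal{P}}\subseteq\mathfrak{T}^\diamond$, and for every fuzzy point $y_t$ and every $\eta\in\mathfrak{T}^\diamond$ with $y_t\prec\eta$ there exists $\beta\in\mathcal{B}_{\mathcal{P}}$ with $y_t\prec\beta\subseteq\eta$.
   Context: Let $Y$ be a nonempty set and $\mathbb{I}=[0,1]$. A fuzzy set in $Y$ is a map $Y\to\mathbb{I}$; $\mathbb{I}^Y$ is the set of all fuzzy sets; $0_Y,1_Y$ are the constant maps with values $0,1$; $\mu\subseteq\nu$ means $\mu(y)\le\nu(y)$ for all $y$; unions/intersections are pointwise sup/inf; $\bar\mu=1_Y-\mu$. For $\mu,\nu\in\mathbb{I}^Y$, $(\mu\oplus\nu)(y)=\min(\mu(y)+\nu(y),1)$ and $(\mu-\nu)(y)=\max(\mu(y)-\nu(y),0)$. A fuzzy point $y_t$ ($y\in Y$, $t\in(0,1]$) is the fuzzy set with value $t$ at $y$ and $0$ elsewhere; $y_t\in\mu$ means $t\le\mu(y)$. We write $y_t\prec\mu$ if $t+\mu(y)>1$. A set $F$ of fuzzy points is identified with the fuzzy set $y\mapsto\sup\{t: y_t\in F\}$ (with $\sup\emptyset=0$). A fuzzy topology on $Y$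 is a family $\mathfrak{T}\subseteq\mathbb{I}^Y$ containing $0_Y,1_Y$ and closed under finite intersections and arbitrary unions. For a fuzzy point $y_t$, $\mathcal{Q}(y_t)=\{\mu\in\mathfrak{T}: y_t\prec\mu\}$. A fuzzy primal on $Y$ is a family $\mathcal{P}\subseteq\mathbb{I}^Y$ such that: (i) $1_Y\notin\mathcal{P}$; (ii) if $\mu\in\mathcal{P}$ and $\nu\subseteq\mu$ then $\nu\in\mathcal{P}$; (iii) if $\mu\cap\nu\in\mathcal{P}$ then $\mu\in\mathcal{P}$ or $\nu\in\mathcal{P}$. A primal fuzzy topological space is a triple $(Y,\mathfrak{T},\mathcal{P})$ with $\mathfrak{T}$ a fuzzy topology and $\mathcal{P}$ a fuzzy primal on $Y$. For $\lambda\in\mathbb{I}^Y$, $\lambda^\diamond$ is the set of fuzzy points $y_t$ such that $\bar{\lambda}\oplus\bar{\mu}\in\mathcal{P}$ for every $\mu\in\mathcal{Q}(y_t)$, and $Cl^\diamond(\lambda)=\lambda\cup\lambda^\diamond$. The primal fuzzy topology is $\mathfrak{T}^\diamond=\{\mu\in\mathbb{I}^Y: Cl^\diamond(\bar{\mu})=\bar{\mu}\}$ (a fuzzy topology on $Y$). *)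

theory Defs
  imports Complex_Main
begin

text \<open>Inclusion of fuzzy sets is the pointwise order on functions.
A fuzzy point y_t is represented by the pair (y, t) with 0 < t <= 1.\<close>

type_synonym 'a fset = "'a \<Rightarrow> real"

definition fuzzy_sets :: "'a fset set" where
  "fuzzy_sets = {\<mu>. \<forall>y. 0 \<le> \<mu> y \<and> \<mu> y \<le> 1}"

definition fzero :: "'a fset" where "fzero = (\<lambda>y. 0)"
definition fone :: "'a fset" where "fone = (\<lambda>y. 1)"

definition fcompl :: "'a fset \<Rightarrow> 'a fset" where
  "fcompl \<mu> = (\<lambda>y. 1 - \<mu> y)"

definition fplus :: "'a fset \<Rightarrow> 'a fset \<Rightarrow> 'a fset" where
  "fplus \<mu> \<nu> = (\<lambda>y. min (\<mu> y + \<nu> y) 1)"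

definition fminus :: "'a fset \<Rightarrow> 'a fset \<Rightarrow> 'a fset" where
  "fminus \<mu> \<nu> = (\<lambda>y. max (\<mu> y - \<nu> y) 0)"

definition finter :: "'a fset \<Rightarrow> 'a fset \<Rightarrow> 'a fset" where
  "finter \<mu> \<nu> = (\<lambda>y. min (\<mu> y) (\<nu> y))"

definition funion :: "'a fset \<Rightarrow> 'a fset \<Rightarrow> 'a fset" where
  "funion \<mu> \<nu> = (\<lambda>y. max (\<mu> y) (\<nu> y))"

definition fUnion :: "'a fset set \<Rightarrow> 'a fset" where
  "fUnion S = (\<lambda>y. if S = {} then 0 else Sup ((\<lambda>\<mu>. \<mu> y) ` S))"

definition fuzzy_point :: "'a \<Rightarrow> real \<Rightarrow> bool" where
  "fuzzy_point y t \<longleftrightarrow> 0 < t \<and> t \<le> 1"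

definition qcoinc :: "'a \<Rightarrow> real \<Rightarrow> 'a fset \<Rightarrow> bool" where
  "qcoinc y t \<mu> \<longleftrightarrow> t + \<mu> y > 1"

definition fuzzy_topology :: "'a fset set \<Rightarrow> bool" where
  "fuzzy_topology T \<longleftrightarrow>
     T \<subseteq> fuzzy_sets \<and> fzero \<in> T \<and> fone \<in> T \<and>
     (\<forall>\<mu>\<in>T. \<forall>\<nu>\<in>T. finter \<mu> \<nu> \<in> T) \<and>
     (\<forall>S. S \<subseteq> T \<longrightarrow> fUnion S \<in> T)"

definition fuzzy_primal :: "'a fset set \<Rightarrow> bool" where
  "fuzzy_primal P \<longleftrightarrow>
     P \<subseteq> fuzzy_sets \<and> fone \<notin> P \<and>
     (\<forall>\<mu>\<in>P. \<forall>\<nu>\<in>fuzzy_sets. \<nu> \<le> \<mu> \<longrightarrow> \<nu> \<in> P) \<and>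
     (\<forall>\<mu>\<in>fuzzy_sets. \<forall>\<nu>\<in>fuzzy_sets. finter \<mu> \<nu> \<in> P \<longrightarrow> \<mu> \<in> P \<or> \<nu> \<in> P)"

definition Qnbhd :: "'a fset set \<Rightarrow> 'a \<Rightarrow> real \<Rightarrow> 'a fset set" where
  "Qnbhd T y t = {\<mu>\<in>T. qcoinc y t \<mu>}"

text \<open>\<lambda>^\<diamond> as a set of fuzzy points, and its identification with a fuzzy set.\<close>
definition diamond_pts :: "'a fset set \<Rightarrow> 'a fset set \<Rightarrow> 'a fset \<Rightarrow> ('a \<times> real) set" where
  "diamond_pts T P lam = {(y, t). fuzzy_point y t \<and>
      (\<forall>\<mu>\<in>Qnbhd T y t. fplus (fcompl lam) (fcompl \<mu>) \<in> P)}"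

definition pts_to_fset :: "('a \<times> real) set \<Rightarrow> 'a fset" where
  "pts_to_fset F = (\<lambda>y. if {t. (y, t) \<in> F} = {} then 0 else Sup {t. (y, t) \<in> F})"

definition diamond :: "'a fset set \<Rightarrow> 'a fset set \<Rightarrow> 'a fset \<Rightarrow> 'a fset" where
  "diamond T P lam = pts_to_fset (diamond_pts T P lam)"

definition Cl_diamond :: "'a fset set \<Rightarrow> 'a fset set \<Rightarrow> 'a fset \<Rightarrow> 'a fset" where
  "Cl_diamond T P lam = funion lam (diamond T P lam)"

definition T_diamond :: "'a fset set \<Rightarrow> 'a fset set \<Rightarrow> 'a fset set" where
  "T_diamond T P = {\<mu>\<in>fuzzy_sets. Cl_diamond T P (fcompl \<mu>) = fcompl \<mu>}"

definition base_P :: "'a fset set \<Rightarrow> 'a fset set \<Rightarrow> 'a fset set" where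
  "base_P T P = {fminus \<mu> (fcompl lam) | \<mu> lam. \<mu> \<in> T \<and> lam \<in> fuzzy_sets \<and> lam \<notin> P}"

end

theory Submission
  imports Defs
begin

text \<open>A base element \<open>\<mu> - \<bar>\<lambda>\<close> is \<open>T\<^sup>\<diamond>\<close>-open: a fuzzy point outside its
complement is q-coincident with \<open>\<mu>\<close>, and then \<open>\<lambda> \<subseteq> (\<mu> - \<bar>\<lambda>) \<oplus> \<bar>\<mu>\<close> together with
\<open>\<lambda> \<notin> P\<close> and heredity of \<open>P\<close> shows that the point is not in the \<open>\<diamond>\<close>-derived set.
Conversely, if \<open>y\<^sub>t \<prec> \<eta>\<close> with \<open>\<eta>\<close> \<open>T\<^sup>\<diamond>\<close>-open, then \<open>y\<^sub>t\<close> is not in \<open>(\<bar>\<eta>)\<^sup>\<diamond>\<close>, which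
yields an open \<open>\<mu> \<in> Q(y\<^sub>t)\<close> with \<open>\<lambda> = \<eta> \<oplus> \<bar>\<mu> \<notin> P\<close>; and \<open>\<mu> - \<bar>\<lambda> = \<eta> \<inter> \<mu>\<close>.\<close>

lemma diamond_le_bound:
  assumes "\<And>t. (y, t) \<in> diamond_pts T P lam \<Longrightarrow> t \<le> c" and "0 \<le> c"
  shows "diamond T P lam y \<le> c"
  unfolding diamond_def pts_to_fset_def using assms
  by (auto intro!: cSup_least)

lemma diamond_pts_le_diamond:
  assumes "(y, t) \<in> diamond_pts T P lam"
  shows "t \<le> diamond T P lam y"
proof -
  have "bdd_above {t. (y, t) \<in> diamond_pts T P lam}"
    by (rule bdd_aboveI[of _ 1]) (auto simp: diamond_pts_def fuzzy_point_def)
  then show ?thesis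
    unfolding diamond_def pts_to_fset_def using assms by (auto intro: cSup_upper)
qed

lemma T_diamondI:
  assumes "\<mu> \<in> fuzzy_sets"
    and "\<And>y t. (y, t) \<in> diamond_pts T P (fcompl \<mu>) \<Longrightarrow> t \<le> fcompl \<mu> y"
  shows "\<mu> \<in> T_diamond T P"
proof -
  have "diamond T P (fcompl \<mu>) y \<le> fcompl \<mu> y" for y
    using assms by (intro diamond_le_bound) (auto simp: fuzzy_sets_def fcompl_def)
  then have "Cl_diamond T P (fcompl \<mu>) = fcompl \<mu>"
    by (simp add: Cl_diamond_def funion_def fun_eq_iff max_absorb1)
  then show ?thesis using assms(1) by (simp add: T_diamond_def)
qed

lemma T_diamond_qcoinc_not_in_diamond_pts:
  assumes "\<eta> \<in> T_diamond T P" and "qcoinc y t \<eta>"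
  shows "(y, t) \<notin> diamond_pts T P (fcompl \<eta>)"
proof
  assume "(y, t) \<in> diamond_pts T P (fcompl \<eta>)"
  then have "t \<le> diamond T P (fcompl \<eta>) y" by (rule diamond_pts_le_diamond)
  also have "\<dots> \<le> fcompl \<eta> y"
  proof -
    have "Cl_diamond T P (fcompl \<eta>) = fcompl \<eta>" using assms(1) by (simp add: T_diamond_def)
    from fun_cong[OF this, of y] show ?thesis by (simp add: Cl_diamond_def funion_def)
  qed
  finally show False using assms(2) by (simp add: fcompl_def qcoinc_def)
qed

lemma fminus_fcompl_mem_fuzzy_sets:
  assumes "\<mu> \<in> fuzzy_sets" and "lam \<in> fuzzy_sets"
  shows "fminus \<mu> (fcompl lam) \<in> fuzzy_sets"
proof -
  have "\<mu> y \<le> 1" "lam y \<le> 1" for y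
    using assms by (auto simp: fuzzy_sets_def)
  then have "\<mu> y + lam y \<le> 2" for y
    by (smt (verit))
  then show ?thesis by (simp add: fuzzy_sets_def fminus_def fcompl_def)
qed

lemma fminus_fcompl_fplus_eq_finter:
  assumes "\<eta> \<in> fuzzy_sets" and "\<mu> \<in> fuzzy_sets"
  shows "fminus \<mu> (fcompl (fplus \<eta> (fcompl \<mu>))) = finter \<eta> \<mu>"
proof -
  have "max (\<mu> y - (1 - min (\<eta> y + (1 - \<mu> y)) 1)) 0 = min (\<eta> y) (\<mu> y)" for y
    using assms unfolding fuzzy_sets_def by (smt (verit) mem_Collect_eq)
  then show ?thesis by (simp add: fun_eq_iff fminus_def fcompl_def fplus_def finter_def)
qed

lemma base_PI:
  assumes "\<mu> \<in> T" and "lam \<in> fuzzy_sets" and "lam \<notin> P"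
  shows "fminus \<mu> (fcompl lam) \<in> base_P T P"
  using assms by (auto simp: base_P_def)

lemma base_P_subset_T_diamond:
  assumes "T \<subseteq> fuzzy_sets" and "fuzzy_primal P"
  shows "base_P T P \<subseteq> T_diamond T P"
proof
  fix \<beta> assume "\<beta> \<in> base_P T P"
  then obtain \<mu> lam where \<beta>: "\<beta> = fminus \<mu> (fcompl lam)" and "\<mu> \<in> T"
    and lam: "lam \<in> fuzzy_sets" "lam \<notin> P"
    unfolding base_P_def by blast
  have \<mu>: "\<mu> \<in> fuzzy_sets" using \<open>\<mu> \<in> T\<close> assms(1) by blast
  show "\<beta> \<in> T_diamond T P"
  proof (rule T_diamondI)
    show \<beta>_fuzzy: "\<beta> \<in> fuzzy_sets" using \<beta> \<mu> lam(1) by (simp add: fminus_fcompl_mem_fuzzy_sets)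
    fix y t assume pt: "(y, t) \<in> diamond_pts T P (fcompl \<beta>)"
    show "t \<le> fcompl \<beta> y"
    proof (rule ccontr)
      assume "\<not> t \<le> fcompl \<beta> y"
      moreover have "0 \<le> lam y" "lam y \<le> 1" "0 \<le> \<mu> y" "t \<le> 1"
        using \<mu> lam(1) pt by (auto simp: fuzzy_sets_def diamond_pts_def fuzzy_point_def)
      ultimately have "qcoinc y t \<mu>"
        by (simp add: qcoinc_def fcompl_def \<beta> fminus_def max_def split: if_splits)
      with \<open>\<mu> \<in> T\<close> pt have "fplus \<beta> (fcompl \<mu>) \<in> P"
        by (auto simp: diamond_pts_def Qnbhd_def fcompl_def)
      moreover have "lam \<le> fplus \<beta> (fcompl \<mu>)"
        using lam(1) by (auto simp: le_fun_def fplus_def \<beta> fminus_def fcompl_def fuzzy_sets_def)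
      ultimately show False
        using assms(2) lam by (auto simp: fuzzy_primal_def)
    qed
  qed
qed

lemma T_diamond_qcoinc_base_P:
  assumes "T \<subseteq> fuzzy_sets" and "\<eta> \<in> T_diamond T P"
    and "fuzzy_point y t" and "qcoinc y t \<eta>"
  shows "\<exists>\<beta>\<in>base_P T P. qcoinc y t \<beta> \<and> \<beta> \<le> \<eta>"
proof -
  have \<eta>: "\<eta> \<in> fuzzy_sets" using assms(2) by (simp add: T_diamond_def)
  obtain \<mu> where "\<mu> \<in> T" and "qcoinc y t \<mu>"
    and not_P: "fplus (fcompl (fcompl \<eta>)) (fcompl \<mu>) \<notin> P"
    using T_diamond_qcoinc_not_in_diamond_pts[OF assms(2,4)] assms(3)
    by (auto simp: diamond_pts_def Qnbhd_def)
  have \<mu>: "\<mu> \<in> fuzzy_sets" using \<open>\<mu> \<in> T\<close> assms(1) by blast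
  define lam where "lam = fplus \<eta> (fcompl \<mu>)"
  have "lam \<in> fuzzy_sets"
    using \<eta> \<mu> by (auto simp: lam_def fuzzy_sets_def fplus_def fcompl_def)
  moreover have "lam \<notin> P" using not_P by (simp add: lam_def fcompl_def)
  ultimately have "fminus \<mu> (fcompl lam) \<in> base_P T P"
    by (rule base_PI[OF \<open>\<mu> \<in> T\<close>])
  then have "finter \<eta> \<mu> \<in> base_P T P"
    using fminus_fcompl_fplus_eq_finter[OF \<eta> \<mu>] by (simp add: lam_def)
  moreover have "qcoinc y t (finter \<eta> \<mu>)"
    using assms(4) \<open>qcoinc y t \<mu>\<close> by (simp add: qcoinc_def finter_def min_def)
  moreover have "finter \<eta> \<mu> \<le> \<eta>" by (simp add: le_fun_def finter_def)
  ultimately show ?thesis by blast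
qed

theorem theorem4p7:
  fixes T P :: "'a fset set"
  assumes "fuzzy_topology T" and "fuzzy_primal P"
  shows "base_P T P \<subseteq> T_diamond T P \<and>
         (\<forall>y t \<eta>. fuzzy_point y t \<and> \<eta> \<in> T_diamond T P \<and> qcoinc y t \<eta> \<longrightarrow>
            (\<exists>\<beta>\<in>base_P T P. qcoinc y t \<beta> \<and> \<beta> \<le> \<eta>))"
proof (intro conjI allI impI)
  have T: "T \<subseteq> fuzzy_sets" using assms(1) by (simp add: fuzzy_topology_def)
  then show "base_P T P \<subseteq> T_diamond T P"
    using assms(2) by (rule base_P_subset_T_diamond)
  fix y t \<eta>
  assume "fuzzy_point y t \<and> \<eta> \<in> T_diamond T P \<and> qcoinc y t \<eta>"
  then show "\<exists>\<beta>\<in>base_P T P. qcoinc y t \<beta> \<and> \<beta> \<le> \<eta>"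
    by (intro T_diamond_qcoinc_base_P[OF T]) auto
qed

end
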